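(* Let $\{M_j\}$ be a collection of hermitian $n\times n$ matrices. If a nontrivial subspace $V\subset\mathbb{C}^n$ is minimal with respect to $\mathrm{Span}_{\mathbb{R}}\{M_j\}$, then no real linear combination of $\{M_j\}$ is positive semi-definite on $V$ unless its restriction to $V$ is zero.
   Context: For a hermitian $n\times n$ matrix $M$ and a subspace $V\subset\mathbb{C}^n$, the restriction of $M$ to $V$ is the restriction of the quadratic form $v\mapsto\bar v^TMv$ to $V$. $\mathrm{Span}_{\mathbb{R}}\{M_j\}$ is indefinite on a nontrivial subspace $V$ if no real linear combination of the $M_j$ is positive definite when restricted to $V$. A nontrivial subspace $V$ is minimal with respect to $\mathrm{Span}_{\mathbb{R}}\{M_j\}$ if $\mathrm{Span}_{\mathbb{R}}\{M_j\}$ is indefinite on $V$ but not indefinite on any nontrivial proper subspace of $V$. *)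

theory Defs
  imports "HOL-Analysis.Analysis"
begin

definition hermitian :: "complex^'n^'n \<Rightarrow> bool" where
  "hermitian M \<longleftrightarrow> (\<forall>i j. M $ i $ j = cnj (M $ j $ i))"

definition qform :: "complex^'n^'n \<Rightarrow> complex^'n \<Rightarrow> complex" where
  "qform M v = (\<Sum>i\<in>UNIV. cnj (v $ i) * (M *v v) $ i)"

definition csubspace :: "(complex^'n) set \<Rightarrow> bool" where
  "csubspace V \<longleftrightarrow> 0 \<in> V \<and> (\<forall>x\<in>V. \<forall>y\<in>V. x + y \<in> V) \<and> (\<forall>c. \<forall>x\<in>V. c *s x \<in> V)"

definition pos_def_on :: "complex^'n^'n \<Rightarrow> (complex^'n) set \<Rightarrow> bool" where
  "pos_def_on M V \<longleftrightarrow> (\<forall>v\<in>V. v \<noteq> 0 \<longrightarrow> Re (qform M v) > 0)"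

text \<open>Span_R S is indefinite on V: no real linear combination (element of the real span) is
  positive definite on V.  Note: complex^'n^'n is a real vector space, so span is the real span.\<close>
definition indefinite_on :: "(complex^'n^'n) set \<Rightarrow> (complex^'n) set \<Rightarrow> bool" where
  "indefinite_on S V \<longleftrightarrow> \<not> (\<exists>N\<in>span S. pos_def_on N V)"

definition minimal_wrt :: "(complex^'n^'n) set \<Rightarrow> (complex^'n) set \<Rightarrow> bool" where
  "minimal_wrt S V \<longleftrightarrow> csubspace V \<and> V \<noteq> {0} \<and> indefinite_on S V \<and>
     (\<forall>W. csubspace W \<and> W \<noteq> {0} \<and> W \<subset> V \<longrightarrow> \<not> indefinite_on S W)"

end

theory Submission
  imports Defs
begin

text \<open>Let \<open>N \<in> span S\<close> be positive semi-definite on \<open>V\<close>. By the parallelogram law its null set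
  \<open>K = {v \<in> V. Re (qform N v) = 0}\<close> is again a complex subspace. If \<open>K\<close> were a proper subspace
  of \<open>V\<close>, minimality would provide \<open>N' \<in> span S\<close> positive definite on \<open>K\<close> (\<open>N' = 0\<close> if
  \<open>K = {0}\<close>), and a compactness argument on the unit sphere of \<open>V\<close> makes \<open>N' + t N\<close> positive
  definite on all of \<open>V\<close> for large \<open>t\<close>, contradicting indefiniteness. So \<open>K = V\<close>, and since
  hermitian forms are real-valued, \<open>qform N\<close> vanishes on \<open>V\<close>.\<close>

lemma qform_expand: "qform M v = (\<Sum>i\<in>UNIV. \<Sum>j\<in>UNIV. cnj (v $ i) * M $ i $ j * v $ j)"
  unfolding qform_def matrix_vector_mult_def by (simp add: sum_distrib_left mult.assoc)

lemma qform_zero_left: "qform 0 v = 0"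
  unfolding qform_expand by simp

lemma qform_add_left: "qform (A + B) v = qform A v + qform B v"
  unfolding qform_expand by (simp add: distrib_left distrib_right sum.distrib)

lemma qform_scaleR_left: "qform (r *\<^sub>R A) v = of_real r * qform A v"
  unfolding qform_expand vector_scaleR_component
  by (simp add: scaleR_conv_of_real sum_distrib_left mult_ac)

lemma qform_scale_right: "qform M (c *s v) = (cnj c * c) * qform M v"
  unfolding qform_expand by (simp add: sum_distrib_left mult_ac)

lemma qform_scaleR_right: "qform M (r *\<^sub>R v) = of_real (r\<^sup>2) * qform M v"
  unfolding qform_expand vector_scaleR_component
  by (simp add: scaleR_conv_of_real sum_distrib_left mult_ac power2_eq_square)

lemma qform_parallelogram: "qform M (v + w) + qform M (v - w) = 2 * qform M v + 2 * qform M w"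
  unfolding qform_expand by (simp add: sum_distrib_left sum.distrib[symmetric] algebra_simps)

lemma qform_zero_right: "qform M 0 = 0"
  by (simp add: qform_def)

lemma continuous_on_Re_qform: "continuous_on A (\<lambda>v. Re (qform M v))"
  unfolding qform_expand by (intro continuous_intros)

lemma hermitian_imp_qform_real:
  assumes "hermitian M"
  shows "Im (qform M v) = 0"
proof -
  have herm: "cnj (M $ i $ j) = M $ j $ i" for i j
    using assms unfolding hermitian_def by (metis complex_cnj_cnj)
  have "cnj (qform M v) = (\<Sum>i\<in>UNIV. \<Sum>j\<in>UNIV. cnj (v $ j) * M $ j $ i * v $ i)"
    unfolding qform_expand cnj_sum complex_cnj_mult complex_cnj_cnj herm
    by (simp only: mult.commute mult.left_commute)
  also have "\<dots> = qform M v"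
    unfolding qform_expand by (rule sum.swap)
  finally show ?thesis
    by (simp add: complex_eq_iff)
qed

lemma span_hermitian_imp_qform_real:
  assumes "\<forall>M\<in>S. hermitian M" and "N \<in> span S"
  shows "Im (qform N v) = 0"
  using assms(2)
proof (induction rule: span_induct)
  case base
  show ?case
    by (auto simp: real_vector.subspace_def qform_zero_left qform_add_left qform_scaleR_left)
next
  case step
  then show ?case
    using assms(1) hermitian_imp_qform_real by blast
qed

lemma csubspace_imp_subspace:
  assumes "csubspace V"
  shows "subspace V"
proof -
  have scaleR_eq: "r *\<^sub>R x = of_real r *s x" for r and x :: "complex^'n"
    unfolding vec_eq_iff vector_scaleR_component by (simp add: scaleR_conv_of_real)
  show ?thesis
    using assms unfolding csubspace_def real_vector.subspace_def scaleR_eq by simp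
qed

lemma csubspace_Re_qform_null:
  assumes V: "csubspace V" and psd: "\<forall>v\<in>V. Re (qform N v) \<ge> 0"
  shows "csubspace {v\<in>V. Re (qform N v) = 0}"
proof -
  have add: "Re (qform N (v + w)) = 0"
    if "v \<in> V" "w \<in> V" "Re (qform N v) = 0" "Re (qform N w) = 0" for v w
  proof -
    have "v + w \<in> V" and "v + (-1) *s w \<in> V"
      using V that unfolding csubspace_def by blast+
    moreover have "v + (-1) *s w = v - w"
      by (simp add: vec_eq_iff)
    ultimately have "Re (qform N (v + w)) \<ge> 0" and "Re (qform N (v - w)) \<ge> 0"
      using psd by auto
    moreover have "Re (qform N (v + w)) + Re (qform N (v - w)) = 0"
      using arg_cong[OF qform_parallelogram[of N v w], of Re] that by simp
    ultimately show ?thesis by linarith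
  qed
  have "cnj c * c = of_real ((Re c)\<^sup>2 + (Im c)\<^sup>2)" for c
    by (metis complex_mult_cnj mult.commute)
  then have "Re (qform N (c *s v)) = 0" if "Re (qform N v) = 0" for c v
    using that by (simp add: qform_scale_right)
  with V add show ?thesis
    unfolding csubspace_def by (auto simp: qform_zero_right)
qed

lemma compact_pos_add_scaled_nonneg:
  fixes h g :: "'a::topological_space \<Rightarrow> real"
  assumes C: "compact C" and h: "continuous_on C h" and g: "continuous_on C g"
    and g_nonneg: "\<forall>x\<in>C. g x \<ge> 0" and h_pos: "\<forall>x\<in>C. g x = 0 \<longrightarrow> h x > 0"
  shows "\<exists>t. \<forall>x\<in>C. h x + t * g x > 0"
proof -
  obtain B where "\<forall>y\<in>h ` C. \<bar>y\<bar> \<le> B"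
    using compact_imp_bounded[OF compact_continuous_image[OF h C]] unfolding bounded_real ..
  then have B: "- B \<le> h x" if "x \<in> C" for x
    using that by (auto simp: abs_le_iff)
  define C' where "C' = C \<inter> h -` {..0}"
  have "compact C'"
    unfolding C'_def by (rule closedin_compact[OF C continuous_closedin_preimage[OF h closed_atMost]])
  obtain m where m: "m > 0" "\<forall>x\<in>C'. m \<le> g x"
  proof (cases "C' = {}")
    case True
    then show ?thesis using that[of 1] by auto
  next
    case False
    moreover have "continuous_on C' g"
      using g by (rule continuous_on_subset) (simp add: C'_def)
    ultimately obtain x0 where x0: "x0 \<in> C'" "\<forall>x\<in>C'. g x0 \<le> g x"
      using continuous_attains_inf[OF \<open>compact C'\<close>] by blast
    have "h x0 \<le> 0" "x0 \<in> C"
      using x0(1) unfolding C'_def by auto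
    then have "g x0 \<ge> 0" "g x0 \<noteq> 0"
      using g_nonneg h_pos by auto
    then have "g x0 > 0"
      by simp
    with x0 that show ?thesis by blast
  qed
  define t where "t = (\<bar>B\<bar> + 1) / m"
  have "h x + t * g x > 0" if "x \<in> C" for x
  proof (cases "h x \<le> 0")
    case True
    then have "g x \<ge> m"
      using m that unfolding C'_def by auto
    moreover have "t \<ge> 0"
      using m by (simp add: t_def)
    ultimately have "t * g x \<ge> t * m"
      by (simp add: mult_left_mono)
    also have "t * m = \<bar>B\<bar> + 1"
      using m by (simp add: t_def)
    finally have "t * g x \<ge> \<bar>B\<bar> + 1" .
    with B[OF that] show ?thesis
      by linarith
  next
    case False
    then show ?thesis
      using g_nonneg that m by (simp add: t_def add_pos_nonneg)
  qed
  then show ?thesis by blast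
qed

lemma pos_def_on_add_scaleR:
  assumes V: "subspace V" and psd: "\<forall>v\<in>V. Re (qform N v) \<ge> 0"
    and pd: "pos_def_on N' {v\<in>V. Re (qform N v) = 0}"
  shows "\<exists>t. pos_def_on (N' + t *\<^sub>R N) V"
proof -
  define C where "C = V \<inter> sphere 0 1"
  have "compact C"
    unfolding C_def using V by (intro closed_Int_compact closed_subspace compact_sphere)
  moreover have "\<forall>x\<in>C. Re (qform N x) \<ge> 0"
    using psd unfolding C_def by auto
  moreover have "\<forall>x\<in>C. Re (qform N x) = 0 \<longrightarrow> Re (qform N' x) > 0"
    using pd unfolding pos_def_on_def C_def by auto
  ultimately obtain t where t: "\<forall>x\<in>C. Re (qform N' x) + t * Re (qform N x) > 0"
    using compact_pos_add_scaled_nonneg[OF _ continuous_on_Re_qform continuous_on_Re_qform]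
    by blast
  have "Re (qform (N' + t *\<^sub>R N) v) > 0" if "v \<in> V" "v \<noteq> 0" for v
  proof -
    define u where "u = (1 / norm v) *\<^sub>R v"
    have "u \<in> C"
      using V that unfolding C_def u_def by (simp add: subspace_scale)
    have v_eq: "norm v *\<^sub>R u = v"
      using that unfolding u_def by simp
    have "qform M v = of_real ((norm v)\<^sup>2) * qform M u" for M
      using qform_scaleR_right[of M "norm v" u] unfolding v_eq .
    then have "Re (qform (N' + t *\<^sub>R N) v)
        = (norm v)\<^sup>2 * (Re (qform N' u) + t * Re (qform N u))"
      by (simp add: qform_add_left qform_scaleR_left distrib_left)
    with t \<open>u \<in> C\<close> that show ?thesis by simp
  qed
  then show ?thesis
    unfolding pos_def_on_def by blast
qed

lemma minimal_wrt_imp_Re_qform_eq_0: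
  assumes min: "minimal_wrt S V" and N: "N \<in> span S"
    and psd: "\<forall>v\<in>V. Re (qform N v) \<ge> 0"
  shows "\<forall>v\<in>V. Re (qform N v) = 0"
proof (rule ccontr)
  assume "\<not> (\<forall>v\<in>V. Re (qform N v) = 0)"
  then obtain v0 where v0: "v0 \<in> V" "Re (qform N v0) \<noteq> 0"
    by blast
  define K where "K = {v\<in>V. Re (qform N v) = 0}"
  have V: "csubspace V" and ind: "indefinite_on S V"
    and minimal: "\<And>W. csubspace W \<Longrightarrow> W \<noteq> {0} \<Longrightarrow> W \<subset> V \<Longrightarrow> \<not> indefinite_on S W"
    using min unfolding minimal_wrt_def by auto
  have K: "csubspace K" "K \<subset> V"
    using csubspace_Re_qform_null[OF V psd] v0 unfolding K_def by auto
  obtain N' where N': "N' \<in> span S" "pos_def_on N' K"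
  proof (cases "K = {0}")
    case True
    then have "pos_def_on 0 K"
      unfolding pos_def_on_def by simp
    with that show ?thesis using span_zero by blast
  next
    case False
    with minimal K that show ?thesis
      unfolding indefinite_on_def by blast
  qed
  then obtain t where "pos_def_on (N' + t *\<^sub>R N) V"
    using pos_def_on_add_scaleR[OF csubspace_imp_subspace[OF V] psd] unfolding K_def by blast
  moreover have "N' + t *\<^sub>R N \<in> span S"
    using N N' by (simp add: span_add span_scale)
  ultimately show False
    using ind unfolding indefinite_on_def by blast
qed

theorem mainTheorem7:
  fixes S :: "(complex^'n^'n) set" and V :: "(complex^'n) set" and N :: "complex^'n^'n"
  assumes herm: "\<forall>M\<in>S. hermitian M"
    and min: "minimal_wrt S V"
    and N: "N \<in> span S"
    and psd: "\<forall>v\<in>V. Re (qform N v) \<ge> 0"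
  shows "\<forall>v\<in>V. qform N v = 0"
  using minimal_wrt_imp_Re_qform_eq_0[OF min N psd] span_hermitian_imp_qform_real[OF herm N]
  by (simp add: complex_eq_iff)

end
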